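(* Let $n\ge2$ be an integer, $\lambda\in(2n-1,2n)$, and $w_m=\phi(|m|/\lambda)$ for $|m|\le 2n-1$. Put $\|\mathbf{w}^0\|_1=1+2\sum_{l=1}^{n-1}w_{2l}$ and $\|\mathbf{w}^1\|_1=2\sum_{l=0}^{n-1}w_{2l+1}$, and consider the sub-masks of $S_{1,\mathbf{w}^\lambda}$, \[ a^0_l=\frac{w_{2l}}{\|\mathbf{w}^0\|_1}\ (l=1-n,\ldots,n-1),\qquad a^1_l=\frac{w_{2l-1}}{\|\mathbf{w}^1\|_1}\ (l=1-n,\ldots,n), \] and the difference sub-masks \[ q^0_j=\sum_{l=1-n}^{j}(a^0_l-a^1_l),\qquad q^1_j=\sum_{l=j}^{n-1}(a^0_l-a^1_{l+1}),\qquad j=1-n,\ldots,n-1. \] If \[ \frac{\sum_{l=j_0}^{n-1}w_{2l+1}}{\sum_{l=j_0}^{n-1} w_{2l}} < \frac{\|\mathbf{w}^1\|_1}{\|\mathbf{w}^0\|_1}<\frac{\sum_{l=j_1}^{n-1}w_{2l+1}}{\sum_{l=j_1+1}^{n-1} w_{2l}} \quad\text{for all } j_0=1,\ldots,n-1,\ j_1=1,\ldots,n-2, \] then $q^0_j>0$ and $q^1_j>0$ for all $j=1-n,\ldots,n-1$.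
   Context: $\phi:[0,1]\to(0,1]$ is a non-increasing function with $\phi(0)=1$. The scheme $S_{1,\mathbf{w}^\lambda}$ (weighted local polynomial regression of degree 1) acts by $(S\mathbf{f})_{2j}=\sum_{l=1-n}^{n-1}a^0_l f_{j+l}$, $(S\mathbf{f})_{2j+1}=\sum_{l=1-n}^{n}a^1_l f_{j+l}$; the numbers $q^0_j,q^1_j$ are the even and odd sub-masks of its difference scheme (the scheme with symbol $q(z)$ satisfying $a(z)=(1+z)q(z)$). *)

theory Defs
  imports "HOL-Analysis.Analysis"
begin

definition wgt :: "(real \<Rightarrow> real) \<Rightarrow> real \<Rightarrow> int \<Rightarrow> real" where
  "wgt \<phi> lam m = \<phi> (real_of_int \<bar>m\<bar> / lam)"

definition wnorm0 :: "(real \<Rightarrow> real) \<Rightarrow> real \<Rightarrow> nat \<Rightarrow> real" where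
  "wnorm0 \<phi> lam n = 1 + 2 * (\<Sum>l=1..int n - 1. wgt \<phi> lam (2*l))"

definition wnorm1 :: "(real \<Rightarrow> real) \<Rightarrow> real \<Rightarrow> nat \<Rightarrow> real" where
  "wnorm1 \<phi> lam n = 2 * (\<Sum>l=0..int n - 1. wgt \<phi> lam (2*l+1))"

definition amask0 :: "(real \<Rightarrow> real) \<Rightarrow> real \<Rightarrow> nat \<Rightarrow> int \<Rightarrow> real" where
  "amask0 \<phi> lam n l = wgt \<phi> lam (2*l) / wnorm0 \<phi> lam n"

definition amask1 :: "(real \<Rightarrow> real) \<Rightarrow> real \<Rightarrow> nat \<Rightarrow> int \<Rightarrow> real" where
  "amask1 \<phi> lam n l = wgt \<phi> lam (2*l-1) / wnorm1 \<phi> lam n"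

definition qmask0 :: "(real \<Rightarrow> real) \<Rightarrow> real \<Rightarrow> nat \<Rightarrow> int \<Rightarrow> real" where
  "qmask0 \<phi> lam n j = (\<Sum>l=1 - int n..j. amask0 \<phi> lam n l - amask1 \<phi> lam n l)"

definition qmask1 :: "(real \<Rightarrow> real) \<Rightarrow> real \<Rightarrow> nat \<Rightarrow> int \<Rightarrow> real" where
  "qmask1 \<phi> lam n j = (\<Sum>l=j..int n - 1. amask0 \<phi> lam n l - amask1 \<phi> lam n (l+1))"

end

theory Submission
  imports Defs
begin

(*
  Since the weights are even in m, the reflection l -> -l turns the partial sums
  of the sub-masks from the left into the tail sums
  E k = sum_{l=k}^{n-1} w_{2l} and O k = sum_{l=k}^{n-1} w_{2l+1}, so that
  q0_j = E(-j)/W0 - O(-j)/W1 and q1_j = q0_{-j}, where W0 = ||w^0||_1, W1 = ||w^1||_1.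
  For j < 0 positivity is the first hypothesis after cross-multiplication.
  For j >= 0 each sub-mask sums to 1, whence q0_j = O(j)/W1 - E(j+1)/W0;
  this is positive by the second hypothesis, except at the ends, where
  q0_0 = 1/(2 W0) and E(n) = 0.
*)

lemma sum_int_reflect:
  "(\<Sum>l=(a::int)..b. f l) = (\<Sum>l=-b..-a. f (-l))"
  by (rule sum.reindex_bij_witness[of _ uminus uminus]) auto

lemma sum_int_shift:
  "(\<Sum>l=(a::int)..b. f l) = (\<Sum>l=a-1..b-1. f (l+1))"
  by (rule sum.reindex_bij_witness[of _ "\<lambda>l. l+1" "\<lambda>l. l-1"]) auto

lemma sum_int_split:
  assumes "a \<le> b + 1" "b \<le> c"
  shows "(\<Sum>l=(a::int)..c. f l) = (\<Sum>l=a..b. f l) + (\<Sum>l=b+1..c. f l)"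
proof -
  have "{a..c} = {a..b} \<union> {b+1..c}" using assms by auto
  then show ?thesis by (simp add: sum.union_disjoint)
qed

lemma wgt_minus [simp]: "wgt \<phi> lam (-m) = wgt \<phi> lam m"
  by (simp add: wgt_def)

lemma wgt_pos:
  assumes "\<And>x. x \<in> {0..1} \<Longrightarrow> 0 < \<phi> x" and "0 < lam" and "real_of_int \<bar>m\<bar> \<le> lam"
  shows "0 < wgt \<phi> lam m"
  unfolding wgt_def using assms by (simp add: divide_le_eq_1)

definition even_tail :: "(real \<Rightarrow> real) \<Rightarrow> real \<Rightarrow> nat \<Rightarrow> int \<Rightarrow> real" where
  "even_tail \<phi> lam n k = (\<Sum>l=k..int n - 1. wgt \<phi> lam (2*l))"

definition odd_tail :: "(real \<Rightarrow> real) \<Rightarrow> real \<Rightarrow> nat \<Rightarrow> int \<Rightarrow> real" where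
  "odd_tail \<phi> lam n k = (\<Sum>l=k..int n - 1. wgt \<phi> lam (2*l+1))"

lemma wnorm0_eq_even_tail: "wnorm0 \<phi> lam n = 1 + 2 * even_tail \<phi> lam n 1"
  by (simp add: wnorm0_def even_tail_def)

lemma wnorm1_eq_odd_tail: "wnorm1 \<phi> lam n = 2 * odd_tail \<phi> lam n 0"
  by (simp add: wnorm1_def odd_tail_def)

lemma even_tail_pos:
  assumes "\<And>m. \<bar>m\<bar> \<le> 2 * int n - 1 \<Longrightarrow> 0 < wgt \<phi> lam m" and "0 \<le> k" "k \<le> int n - 1"
  shows "0 < even_tail \<phi> lam n k"
  unfolding even_tail_def using assms by (intro sum_pos assms(1)) auto

lemma odd_tail_pos:
  assumes "\<And>m. \<bar>m\<bar> \<le> 2 * int n - 1 \<Longrightarrow> 0 < wgt \<phi> lam m" and "0 \<le> k" "k \<le> int n - 1"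
  shows "0 < odd_tail \<phi> lam n k"
  unfolding odd_tail_def using assms by (intro sum_pos assms(1)) auto

lemma even_head_eq_even_tail:
  "(\<Sum>l=1 - int n..j. wgt \<phi> lam (2*l)) = even_tail \<phi> lam n (-j)"
  unfolding even_tail_def by (subst sum_int_reflect) simp

lemma odd_head_eq_odd_tail:
  "(\<Sum>l=1 - int n..j. wgt \<phi> lam (2*l-1)) = odd_tail \<phi> lam n (-j)"
  unfolding odd_tail_def by (subst sum_int_reflect) (simp add: wgt_def abs_minus_commute)

lemma qmask0_eq_tails:
  "qmask0 \<phi> lam n j =
    even_tail \<phi> lam n (-j) / wnorm0 \<phi> lam n - odd_tail \<phi> lam n (-j) / wnorm1 \<phi> lam n"
  by (simp add: qmask0_def amask0_def amask1_def sum_subtractf even_head_eq_even_tail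
      odd_head_eq_odd_tail flip: sum_divide_distrib)

lemma qmask1_eq_qmask0_uminus: "qmask1 \<phi> lam n j = qmask0 \<phi> lam n (-j)"
  unfolding qmask1_def qmask0_def amask0_def amask1_def
  by (subst sum_int_reflect) (simp add: wgt_def abs_minus_commute algebra_simps)

lemma even_tail_uminus:
  assumes "\<phi> 0 = 1" and "0 \<le> j" "j \<le> int n - 1"
  shows "even_tail \<phi> lam n (-j) = wnorm0 \<phi> lam n - even_tail \<phi> lam n (j+1)"
proof -
  let ?w = "\<lambda>l. wgt \<phi> lam (2*l)"
  have "even_tail \<phi> lam n (-j) = (\<Sum>l=-j..-1. ?w l) + ?w 0 + even_tail \<phi> lam n 1"
    unfolding even_tail_def using assms
    by (simp add: sum_int_split[of "-j" "-1" "int n - 1"] sum_int_split[of 0 0 "int n - 1"])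
  moreover have "(\<Sum>l=-j..-1. ?w l) = (\<Sum>l=1..j. ?w l)"
    by (subst sum_int_reflect) simp
  moreover have "even_tail \<phi> lam n 1 = (\<Sum>l=1..j. ?w l) + even_tail \<phi> lam n (j+1)"
    unfolding even_tail_def using assms by (simp add: sum_int_split[of 1 j "int n - 1"])
  ultimately show ?thesis using assms by (simp add: wnorm0_eq_even_tail wgt_def)
qed

lemma odd_tail_uminus:
  assumes "0 \<le> j" "j \<le> int n"
  shows "odd_tail \<phi> lam n (-j) = wnorm1 \<phi> lam n - odd_tail \<phi> lam n j"
proof -
  let ?w = "\<lambda>l. wgt \<phi> lam (2*l+1)"
  have "odd_tail \<phi> lam n (-j) = (\<Sum>l=-j..-1. ?w l) + odd_tail \<phi> lam n 0"
    unfolding odd_tail_def using assms by (simp add: sum_int_split[of "-j" "-1" "int n - 1"])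
  moreover have "(\<Sum>l=-j..-1. ?w l) = (\<Sum>l=0..j-1. ?w l)"
    by (subst sum_int_reflect, subst sum_int_shift) (simp add: wgt_def abs_minus_commute)
  moreover have "odd_tail \<phi> lam n 0 = (\<Sum>l=0..j-1. ?w l) + odd_tail \<phi> lam n j"
    unfolding odd_tail_def using assms by (simp add: sum_int_split[of 0 "j-1" "int n - 1"])
  ultimately show ?thesis by (simp add: wnorm1_eq_odd_tail)
qed

lemma qmask0_eq_tails_nonneg:
  assumes "\<phi> 0 = 1" and "0 \<le> j" "j \<le> int n - 1"
    and "wnorm0 \<phi> lam n \<noteq> 0" "wnorm1 \<phi> lam n \<noteq> 0"
  shows "qmask0 \<phi> lam n j =
    odd_tail \<phi> lam n j / wnorm1 \<phi> lam n - even_tail \<phi> lam n (j+1) / wnorm0 \<phi> lam n"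
  using assms by (simp add: qmask0_eq_tails even_tail_uminus odd_tail_uminus diff_divide_distrib)

lemma qmask0_pos:
  assumes wpos: "\<And>m. \<bar>m\<bar> \<le> 2 * int n - 1 \<Longrightarrow> 0 < wgt \<phi> lam m"
    and "\<phi> 0 = 1" "2 \<le> n"
    and cond0: "\<And>k. k \<in> {1..int n - 1} \<Longrightarrow>
      odd_tail \<phi> lam n k / even_tail \<phi> lam n k < wnorm1 \<phi> lam n / wnorm0 \<phi> lam n"
    and cond1: "\<And>k. k \<in> {1..int n - 2} \<Longrightarrow>
      wnorm1 \<phi> lam n / wnorm0 \<phi> lam n < odd_tail \<phi> lam n k / even_tail \<phi> lam n (k+1)"
    and j: "j \<in> {1 - int n..int n - 1}"
  shows "0 < qmask0 \<phi> lam n j"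
proof -
  have W0: "0 < wnorm0 \<phi> lam n"
    using even_tail_pos[where n=n and k=1, OF wpos] \<open>2 \<le> n\<close> by (simp add: wnorm0_eq_even_tail)
  have W1: "0 < wnorm1 \<phi> lam n"
    using odd_tail_pos[where n=n and k=0, OF wpos] \<open>2 \<le> n\<close> by (simp add: wnorm1_eq_odd_tail)
  consider "j < 0" | "j = 0" | "0 < j" "j < int n - 1" | "j = int n - 1"
    using j by fastforce
  then show ?thesis
  proof cases
    case 1
    then show ?thesis
      using cond0[of "-j"] even_tail_pos[where n=n and k="-j", OF wpos] j W0 W1
      by (simp add: qmask0_eq_tails field_simps)
  next
    case 2
    then show ?thesis
      using W0 W1 \<open>\<phi> 0 = 1\<close> \<open>2 \<le> n\<close>
      by (simp add: qmask0_eq_tails_nonneg wnorm0_eq_even_tail wnorm1_eq_odd_tail field_simps)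
  next
    case 3
    then show ?thesis
      using cond1[of j] even_tail_pos[where n=n and k="j+1", OF wpos] W0 W1 \<open>\<phi> 0 = 1\<close>
      by (simp add: qmask0_eq_tails_nonneg field_simps)
  next
    case 4
    then show ?thesis
      using odd_tail_pos[where n=n and k=j, OF wpos] W0 W1 \<open>\<phi> 0 = 1\<close> \<open>2 \<le> n\<close>
      by (simp add: qmask0_eq_tails_nonneg even_tail_def)
  qed
qed

theorem lemma4p3:
  fixes \<phi> :: "real \<Rightarrow> real" and lam :: real and n :: nat
  assumes phi_range: "\<And>x. x \<in> {0..1} \<Longrightarrow> 0 < \<phi> x \<and> \<phi> x \<le> 1"
    and phi_mono: "\<And>x y. x \<in> {0..1} \<Longrightarrow> y \<in> {0..1} \<Longrightarrow> x \<le> y \<Longrightarrow> \<phi> y \<le> \<phi> x"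
    and phi0: "\<phi> 0 = 1"
    and n2: "n \<ge> 2"
    and lam: "2 * real n - 1 < lam" "lam < 2 * real n"
    and cond0: "\<And>j0. j0 \<in> {1..int n - 1} \<Longrightarrow>
        (\<Sum>l=j0..int n - 1. wgt \<phi> lam (2*l+1)) / (\<Sum>l=j0..int n - 1. wgt \<phi> lam (2*l))
          < wnorm1 \<phi> lam n / wnorm0 \<phi> lam n"
    and cond1: "\<And>j1. j1 \<in> {1..int n - 2} \<Longrightarrow>
        wnorm1 \<phi> lam n / wnorm0 \<phi> lam n
          < (\<Sum>l=j1..int n - 1. wgt \<phi> lam (2*l+1)) / (\<Sum>l=j1+1..int n - 1. wgt \<phi> lam (2*l))"
  shows "\<forall>j \<in> {1 - int n..int n - 1}. qmask0 \<phi> lam n j > 0 \<and> qmask1 \<phi> lam n j > 0"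
proof -
  have wpos: "0 < wgt \<phi> lam m" if "\<bar>m\<bar> \<le> 2 * int n - 1" for m
  proof -
    have "real_of_int \<bar>m\<bar> \<le> 2 * real n - 1"
      using that of_int_le_iff[where 'a=real, of "\<bar>m\<bar>" "2 * int n - 1"] by simp
    then show ?thesis
      using lam phi_range by (intro wgt_pos) auto
  qed
  have "0 < qmask0 \<phi> lam n j" if "j \<in> {1 - int n..int n - 1}" for j
    using qmask0_pos[OF wpos phi0 n2 _ _ that] cond0 cond1
    unfolding even_tail_def odd_tail_def by blast
  then show ?thesis by (simp add: qmask1_eq_qmask0_uminus)
qed

end
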